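(* Let $J\in\mathbb{R}\cup\{\infty\}$ and $K\in\mathbb{R}$ with $J>K$. If $(x_n)_{n\in\mathbb{Z}}\in\mathcal{X}^!_{J,K}$, then there exists at most one sequence $(u_n)_{n\in\mathbb{Z}}\in\mathbb{R}^{\mathbb{Z}}$ such that $\left(F^{(J,K)}_{udK}\right)^{(2)}(x_n,u_{n-1})=u_n$ for all $n\in\mathbb{Z}$.
   Context: $F^{(J,K)}_{udK}(x,u):=\big(u-\max\{x+u-J,0\}+\max\{x+u-K,0\},\;x-\max\{x+u-K,0\}+\max\{x+u-J,0\}\big)$ for $x,u\in\mathbb{R}$, with $\max\{x+u-\infty,0\}:=0$; the superscript $(2)$ denotes the second coordinate. For $J=\infty>K$, $\mathcal{X}^!_{J,K}:=\{(x_n)_{n\in\mathbb{Z}}\in\mathbb{R}^{\mathbb{Z}}:\limsup_{n\to-\infty}\mathbf{1}_{\{x_n+x_{n+1}\le K\}}=1\}$; for $\infty>J>K$, $\mathcal{X}^!_{J,K}:=\{(x_n)_{n\in\mathbb{Z}}:\limsup_{n\to-\infty}\mathbf{1}_{\{x_n+x_{n+1}\le K\}\cup\{x_n+x_{n+1}\ge2J-K\}}=1\}$. *)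

theory Defs
  imports "HOL-Analysis.Analysis" "HOL-Library.Extended_Real"
begin

definition maxJ :: "ereal \<Rightarrow> real \<Rightarrow> real" where
  "maxJ J s = (case J of ereal j \<Rightarrow> max (s - j) 0 | _ \<Rightarrow> 0)"

definition F_udK :: "ereal \<Rightarrow> real \<Rightarrow> real \<Rightarrow> real \<Rightarrow> real \<times> real" where
  "F_udK J K x u =
     (u - maxJ J (x + u) + max (x + u - K) 0,
      x - max (x + u - K) 0 + maxJ J (x + u))"

definition Xbang :: "ereal \<Rightarrow> real \<Rightarrow> (int \<Rightarrow> real) set" where
  "Xbang J K = {x. case J of
      PInfty \<Rightarrow> Limsup at_bot (\<lambda>n::int. ereal (indicator {m. x m + x (m+1) \<le> K} n)) = 1
    | ereal j \<Rightarrow> Limsup at_bot (\<lambda>n::int. ereal (indicator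
         ({m. x m + x (m+1) \<le> K} \<union> {m. x m + x (m+1) \<ge> 2*j - K}) n)) = 1
    | MInfty \<Rightarrow> False}"

end

theory Submission
  imports Defs
begin

text \<open>
  Since \<open>J > K\<close>, the second coordinate of \<open>F\<^sub>u\<^sub>d\<^sub>K\<close> satisfies
  \<open>u\<^sub>n \<le> x\<^sub>n\<close> and, for finite \<open>J\<close>, \<open>u\<^sub>n \<ge> x\<^sub>n + K - J\<close>. Hence at an index \<open>n\<close> with
  \<open>x\<^sub>n + x\<^sub>n\<^sub>+\<^sub>1 \<le> K\<close> every solution has \<open>u\<^sub>n\<^sub>+\<^sub>1 = x\<^sub>n\<^sub>+\<^sub>1\<close>, and at an index with
  \<open>x\<^sub>n + x\<^sub>n\<^sub>+\<^sub>1 \<ge> 2J - K\<close> every solution has \<open>u\<^sub>n\<^sub>+\<^sub>1 = x\<^sub>n\<^sub>+\<^sub>1 + K - J\<close>: the value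
  no longer depends on the past. Membership in \<open>\<X>\<^sup>!\<^sub>J\<^sub>,\<^sub>K\<close> provides such indices
  arbitrarily far to the left, and two solutions that agree at one index agree from
  there on.
\<close>

lemma Limsup_indicator_at_bot_nonzero_imp_le:
  fixes S :: "'a::{linorder,no_bot} set"
  assumes "Limsup at_bot (\<lambda>n. ereal (indicator S n)) \<noteq> 0"
  shows "\<exists>n\<le>N. n \<in> S"
proof (rule ccontr)
  assume "\<not> (\<exists>n\<le>N. n \<in> S)"
  then have "eventually (\<lambda>n. ereal (indicator S n) = 0) at_bot"
    unfolding eventually_at_bot_linorder by (auto simp: indicator_def)
  then have "Limsup at_bot (\<lambda>n. ereal (indicator S n)) = Limsup at_bot (\<lambda>_::'a. 0)"
    by (rule Limsup_eq)
  with assms show False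
    by (simp add: Limsup_const)
qed

lemma Xbang_synchronizing_indices:
  assumes "J > ereal K" and "x \<in> Xbang J K"
  shows "\<exists>n\<le>N. x n + x (n + 1) \<le> K \<or> (\<exists>j. J = ereal j \<and> x n + x (n + 1) \<ge> 2 * j - K)"
proof (cases J)
  case (real j)
  let ?S = "{m. x m + x (m + 1) \<le> K} \<union> {m. x m + x (m + 1) \<ge> 2 * j - K}"
  from assms(2) real have "Limsup at_bot (\<lambda>n. ereal (indicator ?S n)) = 1"
    by (simp add: Xbang_def)
  then obtain n where "n \<le> N" and "n \<in> ?S"
    using Limsup_indicator_at_bot_nonzero_imp_le[of ?S N] by auto
  with real show ?thesis
    by blast
next
  case PInf
  let ?S = "{m. x m + x (m + 1) \<le> K}"
  from assms(2) PInf have "Limsup at_bot (\<lambda>n. ereal (indicator ?S n)) = 1"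
    by (simp add: Xbang_def)
  then show ?thesis
    using Limsup_indicator_at_bot_nonzero_imp_le[of ?S N] by auto
next
  case MInf
  with assms(1) show ?thesis
    by simp
qed

lemma snd_F_udK_le:
  "J > ereal K \<Longrightarrow> snd (F_udK J K x u) \<le> x"
  by (cases J) (auto simp: F_udK_def maxJ_def)

lemma snd_F_udK_eq_if_sum_le:
  "J > ereal K \<Longrightarrow> x + u \<le> K \<Longrightarrow> snd (F_udK J K x u) = x"
  by (cases J) (auto simp: F_udK_def maxJ_def)

lemma snd_F_udK_ge:
  "j > K \<Longrightarrow> snd (F_udK (ereal j) K x u) \<ge> x + K - j"
  by (auto simp: F_udK_def maxJ_def)

lemma snd_F_udK_eq_if_sum_ge:
  "j > K \<Longrightarrow> x + u \<ge> j \<Longrightarrow> snd (F_udK (ereal j) K x u) = x + K - j"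
  by (auto simp: F_udK_def maxJ_def)

lemma recurrence_solutions_agree_from:
  fixes u v :: "int \<Rightarrow> 'a"
  assumes "\<And>n. u n = f n (u (n - 1))" and "\<And>n. v n = f n (v (n - 1))"
    and "u n = v n" and "n \<le> m"
  shows "u m = v m"
  using assms(4)
proof (induction m rule: int_ge_induct)
  case base
  show ?case using assms(3) .
next
  case (step i)
  then show ?case
    using assms(1,2)[of "i + 1"] by simp
qed

definition udK_solution :: "ereal \<Rightarrow> real \<Rightarrow> (int \<Rightarrow> real) \<Rightarrow> (int \<Rightarrow> real) \<Rightarrow> bool" where
  "udK_solution J K x u \<longleftrightarrow> (\<forall>n. snd (F_udK J K (x n) (u (n - 1))) = u n)"

lemma udK_solution_step:
  "udK_solution J K x u \<Longrightarrow> u (n + 1) = snd (F_udK J K (x (n + 1)) (u n))"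
  unfolding udK_solution_def by (metis add_diff_cancel_right')

lemma udK_solutions_agree_from:
  assumes "udK_solution J K x u" and "udK_solution J K x v"
    and "u n = v n" and "n \<le> m"
  shows "u m = v m"
  using assms recurrence_solutions_agree_from[where f = "\<lambda>n w. snd (F_udK J K (x n) w)"]
  unfolding udK_solution_def by metis

lemma udK_solution_le:
  "udK_solution J K x u \<Longrightarrow> J > ereal K \<Longrightarrow> u n \<le> x n"
  unfolding udK_solution_def by (metis snd_F_udK_le)

lemma udK_solution_ge:
  "udK_solution (ereal j) K x u \<Longrightarrow> j > K \<Longrightarrow> u n \<ge> x n + K - j"
  unfolding udK_solution_def by (metis snd_F_udK_ge)

lemma udK_solution_forgets_if_sum_le:
  assumes "udK_solution J K x u" and "J > ereal K" and "x n + x (n + 1) \<le> K"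
  shows "u (n + 1) = x (n + 1)"
proof -
  have "x (n + 1) + u n \<le> K"
    using udK_solution_le[OF assms(1,2), of n] assms(3) by simp
  then show ?thesis
    using udK_solution_step[OF assms(1)] snd_F_udK_eq_if_sum_le[OF assms(2)] by simp
qed

lemma udK_solution_forgets_if_sum_ge:
  assumes "udK_solution (ereal j) K x u" and "j > K" and "x n + x (n + 1) \<ge> 2 * j - K"
  shows "u (n + 1) = x (n + 1) + K - j"
proof -
  have "x (n + 1) + u n \<ge> j"
    using udK_solution_ge[OF assms(1,2), of n] assms(3) by simp
  then show ?thesis
    using udK_solution_step[OF assms(1)] snd_F_udK_eq_if_sum_ge[OF assms(2)] by simp
qed

lemma udK_solutions_agree_somewhere_le:
  assumes "J > ereal K" and "x \<in> Xbang J K"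
    and "udK_solution J K x u" and "udK_solution J K x v"
  shows "\<exists>n\<le>N. u (n + 1) = v (n + 1)"
proof -
  obtain n where "n \<le> N"
    and n: "x n + x (n + 1) \<le> K \<or> (\<exists>j. J = ereal j \<and> x n + x (n + 1) \<ge> 2 * j - K)"
    using Xbang_synchronizing_indices[OF assms(1,2)] by blast
  moreover have "u (n + 1) = v (n + 1)"
  proof (cases "x n + x (n + 1) \<le> K")
    case True
    then show ?thesis
      using udK_solution_forgets_if_sum_le assms(1,3,4) by metis
  next
    case False
    with n obtain j where J: "J = ereal j" and "x n + x (n + 1) \<ge> 2 * j - K"
      by blast
    moreover have "j > K"
      using assms(1) J by simp
    ultimately show ?thesis
      using udK_solution_forgets_if_sum_ge assms(3,4) by metis
  qed
  ultimately show ?thesis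
    by blast
qed

theorem lemma3p5:
  fixes J :: ereal and K :: real and x :: "int \<Rightarrow> real"
  assumes "J > ereal K"
    and "x \<in> Xbang J K"
  shows "\<forall>u v :: int \<Rightarrow> real.
           (\<forall>n. snd (F_udK J K (x n) (u (n - 1))) = u n) \<and>
           (\<forall>n. snd (F_udK J K (x n) (v (n - 1))) = v n) \<longrightarrow> u = v"
proof (intro allI impI ext)
  fix u v :: "int \<Rightarrow> real" and m :: int
  assume "(\<forall>n. snd (F_udK J K (x n) (u (n - 1))) = u n) \<and>
          (\<forall>n. snd (F_udK J K (x n) (v (n - 1))) = v n)"
  then have u: "udK_solution J K x u" and v: "udK_solution J K x v"
    by (simp_all add: udK_solution_def)
  obtain n where "n \<le> m - 1" and "u (n + 1) = v (n + 1)"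
    using udK_solutions_agree_somewhere_le[OF assms u v] by blast
  then show "u m = v m"
    using udK_solutions_agree_from[OF u v] by simp
qed

end
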